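(* Let $L>0$, $\mu>0$ and $0<\mu_{x}\le L$ be given, with $\kappa:=L/\mu\ge 2$. Then there exists a (quadratic) function $f:\mathbb{R}\times\mathbb{R}\to\mathbb{R}$ having a differential Stackelberg equilibrium $z^\ast$ with parameters $(L,\mu,\mu_{x})$ such that, whenever the stepsize ratio satisfies $r=\eta_y/\eta_x\le\kappa$, GDA with exact gradients does not converge locally to $z^\ast$, for every choice of stepsize $\eta_x>0$: that is, for every $\delta>0$ there is an initial point $z^0$ with $\|z^0-z^\ast\|_2\le\delta$ from which the GDA iterates do not converge to $z^\ast$.
   Context: Let $f:\mathbb{R}^n\times\mathbb{R}^m\to\mathbb{R}$ be twice continuously differentiable, and write $z=(x,y)$. For a point $z^\ast=(x^\ast,y^\ast)$ write the Hessian as $\nabla^2 f(z^\ast)=\begin{pmatrix} C & B\\ B^\top & -A\end{pmatrix}$ with $C=\nabla^2_{xx}f(z^\ast)$, $B=\nabla^2_{xy}f(z^\ast)$, $-A=\nabla^2_{yy}f(z^\ast)$. The point $z^\ast$ is a differential Stackelberg equilibrium if $\nabla_x f(z^\ast)=0$, $\nabla_y f(z^\ast)=0$, $A\succ 0$ and $C+BA^{-1}B^\top\succ 0$. It is said to have parameters $(L,\mu,\mu_x)$ if $\max\{\|A\|_2,\|B\|_2,\|C\|_2\}\le L$, $\mu=\lambda_{\min}(A)$ and $\mu_x=\min\{L,\lambda_{\min}(C+BA^{-1}B^\top)\}$; set $\kappa=L/\mu$, $\kappa_x=L/\mu_x$. GDA with stepsizes $\eta_x,\eta_y>0$ and exact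 gradients is the iteration $x^{k+1}=x^k-\eta_x\nabla_x f(x^k;y^k)$, $y^{k+1}=y^k+\eta_y\nabla_y f(x^k;y^k)$; the stepsize ratio is $r=\eta_y/\eta_x$. *)

theory Defs
  imports "HOL-Analysis.Analysis"
begin

definition px :: "(real \<times> real \<Rightarrow> real) \<Rightarrow> real \<times> real \<Rightarrow> real" where
  "px f z = deriv (\<lambda>t. f (t, snd z)) (fst z)"

definition py :: "(real \<times> real \<Rightarrow> real) \<Rightarrow> real \<times> real \<Rightarrow> real" where
  "py f z = deriv (\<lambda>t. f (fst z, t)) (snd z)"

definition partially_differentiable :: "(real \<times> real \<Rightarrow> real) \<Rightarrow> bool" where
  "partially_differentiable f \<longleftrightarrow>
     (\<forall>z. (\<lambda>t. f (t, snd z)) differentiable (at (fst z))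
        \<and> (\<lambda>t. f (fst z, t)) differentiable (at (snd z)))"

definition C2 :: "(real \<times> real \<Rightarrow> real) \<Rightarrow> bool" where
  "C2 f \<longleftrightarrow> partially_differentiable f
     \<and> partially_differentiable (px f) \<and> partially_differentiable (py f)
     \<and> continuous_on UNIV f
     \<and> continuous_on UNIV (px f) \<and> continuous_on UNIV (py f)
     \<and> continuous_on UNIV (px (px f)) \<and> continuous_on UNIV (py (px f))
     \<and> continuous_on UNIV (px (py f)) \<and> continuous_on UNIV (py (py f))"

definition hessC :: "(real \<times> real \<Rightarrow> real) \<Rightarrow> real \<times> real \<Rightarrow> real" where
  "hessC f z = px (px f) z"

definition hessB :: "(real \<times> real \<Rightarrow> real) \<Rightarrow> real \<times> real \<Rightarrow> real" where
  "hessB f z = py (px f) z"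

definition hessA :: "(real \<times> real \<Rightarrow> real) \<Rightarrow> real \<times> real \<Rightarrow> real" where
  "hessA f z = - py (py f) z"

definition diff_stackelberg :: "(real \<times> real \<Rightarrow> real) \<Rightarrow> real \<times> real \<Rightarrow> bool" where
  "diff_stackelberg f z \<longleftrightarrow> px f z = 0 \<and> py f z = 0 \<and> hessA f z > 0
     \<and> hessC f z + hessB f z * inverse (hessA f z) * hessB f z > 0"

text \<open>DSE with parameters (L, mu, mu_x); the spectral norm of a 1x1 matrix is
  the absolute value, and lambda_min is the entry itself.\<close>

definition dse_params :: "(real \<times> real \<Rightarrow> real) \<Rightarrow> real \<times> real \<Rightarrow> real \<Rightarrow> real \<Rightarrow> real \<Rightarrow> bool" where
  "dse_params f z L \<mu> \<mu>x \<longleftrightarrow> diff_stackelberg f z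
     \<and> max \<bar>hessA f z\<bar> (max \<bar>hessB f z\<bar> \<bar>hessC f z\<bar>) \<le> L
     \<and> \<mu> = hessA f z
     \<and> \<mu>x = min L (hessC f z + hessB f z * inverse (hessA f z) * hessB f z)"

primrec gda :: "(real \<times> real \<Rightarrow> real) \<Rightarrow> real \<Rightarrow> real \<Rightarrow> real \<times> real \<Rightarrow> nat \<Rightarrow> real \<times> real" where
  "gda f \<eta>x \<eta>y z0 0 = z0"
| "gda f \<eta>x \<eta>y z0 (Suc k) =
     (let z = gda f \<eta>x \<eta>y z0 k in
      (fst z - \<eta>x * px f z, snd z + \<eta>y * py f z))"

definition is_quadratic :: "(real \<times> real \<Rightarrow> real) \<Rightarrow> bool" where
  "is_quadratic f \<longleftrightarrow> (\<exists>a b c d e g. \<forall>x y.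
     f (x, y) = a * x^2 + b * x * y + c * y^2 + d * x + e * y + g)"

end

theory Submission
  imports Defs
begin

text \<open>For the quadratic f(x,y) = -L x^2/2 + b x y - \<mu> y^2/2 with b^2 = \<mu>(\<mu>x + L), the origin is a
  differential Stackelberg equilibrium with parameters (L, \<mu>, \<mu>x), and GDA is a linear map whose
  determinant is 1 + (\<eta>x L - \<eta>y \<mu>) + \<eta>x \<eta>y \<mu> \<mu>x, which is at least 1 when \<eta>y/\<eta>x \<le> L/\<mu>.
  The determinant of the pair of orbits started at \<delta>e1 and \<delta>e2 therefore never drops below \<delta>^2,
  so the two orbits cannot both converge to the origin.\<close>

definition quadratic_fun :: "real \<Rightarrow> real \<Rightarrow> real \<Rightarrow> real \<Rightarrow> real \<Rightarrow> real \<Rightarrow> real \<times> real \<Rightarrow> real" where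
  "quadratic_fun p q s d e g =
     (\<lambda>z. p * (fst z)^2 + q * fst z * snd z + s * (snd z)^2 + d * fst z + e * snd z + g)"

lemma is_quadratic_quadratic_fun: "is_quadratic (quadratic_fun p q s d e g)"
  unfolding is_quadratic_def quadratic_fun_def by (intro exI allI) (simp only: fst_conv snd_conv)

lemma px_quadratic_fun: "px (quadratic_fun p q s d e g) = quadratic_fun 0 0 0 (2 * p) q d"
proof
  fix z :: "real \<times> real"
  have "((\<lambda>t. quadratic_fun p q s d e g (t, snd z))
          has_field_derivative quadratic_fun 0 0 0 (2 * p) q d z) (at (fst z))"
    unfolding quadratic_fun_def by (auto intro!: derivative_eq_intros simp: algebra_simps)
  then show "px (quadratic_fun p q s d e g) z = quadratic_fun 0 0 0 (2 * p) q d z"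
    unfolding px_def by (rule DERIV_imp_deriv)
qed

lemma py_quadratic_fun: "py (quadratic_fun p q s d e g) = quadratic_fun 0 0 0 q (2 * s) e"
proof
  fix z :: "real \<times> real"
  have "((\<lambda>t. quadratic_fun p q s d e g (fst z, t))
          has_field_derivative quadratic_fun 0 0 0 q (2 * s) e z) (at (snd z))"
    unfolding quadratic_fun_def by (auto intro!: derivative_eq_intros simp: algebra_simps)
  then show "py (quadratic_fun p q s d e g) z = quadratic_fun 0 0 0 q (2 * s) e z"
    unfolding py_def by (rule DERIV_imp_deriv)
qed

lemma partially_differentiable_quadratic_fun:
  "partially_differentiable (quadratic_fun p q s d e g)"
  unfolding partially_differentiable_def quadratic_fun_def by (auto intro!: derivative_intros)

lemma continuous_on_quadratic_fun: "continuous_on UNIV (quadratic_fun p q s d e g)"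
  unfolding quadratic_fun_def by (auto intro!: continuous_intros)

lemma C2_quadratic_fun: "C2 (quadratic_fun p q s d e g)"
  unfolding C2_def px_quadratic_fun py_quadratic_fun
  by (simp add: partially_differentiable_quadratic_fun continuous_on_quadratic_fun)

lemma
  shows hessC_quadratic_fun: "hessC (quadratic_fun p q s d e g) z = 2 * p"
    and hessB_quadratic_fun: "hessB (quadratic_fun p q s d e g) z = q"
    and hessA_quadratic_fun: "hessA (quadratic_fun p q s d e g) z = - 2 * s"
  unfolding hessC_def hessB_def hessA_def px_quadratic_fun py_quadratic_fun
  by (simp_all add: quadratic_fun_def)

definition wedge :: "real \<times> real \<Rightarrow> real \<times> real \<Rightarrow> real" where
  "wedge u v = fst u * snd v - snd u * fst v"

lemma linear_orbits_not_both_tendsto_zero: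
  fixes u v :: "nat \<Rightarrow> real \<times> real"
  assumes step: "\<And>w k. w \<in> {u, v} \<Longrightarrow>
      w (Suc k) = (a * fst (w k) + b * snd (w k), c * fst (w k) + d * snd (w k))"
    and det: "a * d - b * c \<ge> 1"
    and start: "wedge (u 0) (v 0) > 0"
  shows "\<not> (u \<longlonglongrightarrow> (0, 0) \<and> v \<longlonglongrightarrow> (0, 0))"
proof
  assume lim: "u \<longlonglongrightarrow> (0, 0) \<and> v \<longlonglongrightarrow> (0, 0)"
  have wedge_power: "wedge (u k) (v k) = (a * d - b * c) ^ k * wedge (u 0) (v 0)" for k
  proof (induction k)
    case 0 show ?case by simp
  next
    case (Suc k)
    have "wedge (u (Suc k)) (v (Suc k)) = (a * d - b * c) * wedge (u k) (v k)"
      using step[of u k] step[of v k] by (simp add: wedge_def algebra_simps)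
    with Suc show ?case by simp
  qed
  have "(\<lambda>k. wedge (u k) (v k)) \<longlonglongrightarrow> wedge (0, 0) (0, 0)"
    unfolding wedge_def using lim by (intro tendsto_intros) auto
  moreover have "wedge (u 0) (v 0) \<le> wedge (u k) (v k)" for k
  proof -
    have "1 \<le> (a * d - b * c) ^ k" using det by (rule one_le_power)
    then have "1 * wedge (u 0) (v 0) \<le> (a * d - b * c) ^ k * wedge (u 0) (v 0)"
      using start by (intro mult_right_mono) auto
    then show ?thesis by (simp add: wedge_power[of k])
  qed
  ultimately have "wedge (u 0) (v 0) \<le> wedge (0, 0) (0, 0)"
    by (intro LIMSEQ_le_const) auto
  with start show False by (simp add: wedge_def)
qed

lemma gda_not_tendsto_origin_of_linear_gradient:
  assumes px: "\<And>z. px f z = \<alpha> * fst z + \<beta> * snd z"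
    and py: "\<And>z. py f z = \<gamma> * fst z + \<epsilon> * snd z"
    and det: "(1 - \<eta>x * \<alpha>) * (1 + \<eta>y * \<epsilon>) + \<eta>x * \<eta>y * \<beta> * \<gamma> \<ge> 1"
    and "\<delta> > 0"
  shows "\<exists>z0. norm (z0 - (0, 0)) \<le> \<delta> \<and> \<not> (gda f \<eta>x \<eta>y z0 \<longlonglongrightarrow> (0, 0))"
proof -
  have "\<not> (gda f \<eta>x \<eta>y (\<delta>, 0) \<longlonglongrightarrow> (0, 0) \<and> gda f \<eta>x \<eta>y (0, \<delta>) \<longlonglongrightarrow> (0, 0))"
  proof (rule linear_orbits_not_both_tendsto_zero
      [where a = "1 - \<eta>x * \<alpha>" and b = "- \<eta>x * \<beta>" and c = "\<eta>y * \<gamma>" and d = "1 + \<eta>y * \<epsilon>"])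
    show "w (Suc k) = ((1 - \<eta>x * \<alpha>) * fst (w k) + - \<eta>x * \<beta> * snd (w k),
        \<eta>y * \<gamma> * fst (w k) + (1 + \<eta>y * \<epsilon>) * snd (w k))"
      if "w \<in> {gda f \<eta>x \<eta>y (\<delta>, 0), gda f \<eta>x \<eta>y (0, \<delta>)}" for w k
      using that by (auto simp: px py Let_def algebra_simps)
    show "(1 - \<eta>x * \<alpha>) * (1 + \<eta>y * \<epsilon>) - - \<eta>x * \<beta> * (\<eta>y * \<gamma>) \<ge> 1"
      using det by (simp add: algebra_simps)
    show "wedge (gda f \<eta>x \<eta>y (\<delta>, 0) 0) (gda f \<eta>x \<eta>y (0, \<delta>) 0) > 0"
      using \<open>\<delta> > 0\<close> by (simp add: wedge_def)
  qed
  moreover have "norm ((\<delta>, 0) - (0, 0)) \<le> \<delta>" "norm ((0, \<delta>) - (0, 0)) \<le> \<delta>"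
    using \<open>\<delta> > 0\<close> by (simp_all add: norm_Pair)
  ultimately show ?thesis by blast
qed

lemma
  shows px_saddle_quadratic: "px (quadratic_fun (- L / 2) b (- \<mu> / 2) 0 0 0) z = - L * fst z + b * snd z"
    and py_saddle_quadratic: "py (quadratic_fun (- L / 2) b (- \<mu> / 2) 0 0 0) z = b * fst z - \<mu> * snd z"
  unfolding px_quadratic_fun py_quadratic_fun by (simp_all add: quadratic_fun_def)

lemma dse_params_saddle_quadratic:
  assumes "0 < \<mu>" "\<mu> \<le> L" "0 < \<mu>x" "\<mu>x \<le> L" "0 \<le> b" "b \<le> L" "b * b = \<mu> * (\<mu>x + L)"
  shows "dse_params (quadratic_fun (- L / 2) b (- \<mu> / 2) 0 0 0) (0, 0) L \<mu> \<mu>x"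
proof -
  have "- L + b * inverse \<mu> * b = \<mu>x"
    using assms by (simp add: field_simps)
  with assms show ?thesis
    unfolding dse_params_def diff_stackelberg_def hessA_quadratic_fun hessB_quadratic_fun
      hessC_quadratic_fun px_saddle_quadratic py_saddle_quadratic
    by simp
qed

text \<open>The GDA determinant is 1 + (\<eta>x L - \<eta>y \<mu>) + \<eta>x \<eta>y (b^2 - L \<mu>), so instability needs only
  \<eta>y \<mu> \<le> \<eta>x L and a nonnegative Schur complement.\<close>

lemma gda_saddle_quadratic_not_tendsto_origin:
  assumes "0 < \<eta>x" "0 < \<eta>y" "\<eta>y * \<mu> \<le> \<eta>x * L" "\<mu> * L \<le> b * b" "0 < \<delta>"
  shows "\<exists>z0. norm (z0 - (0, 0)) \<le> \<delta>
    \<and> \<not> (gda (quadratic_fun (- L / 2) b (- \<mu> / 2) 0 0 0) \<eta>x \<eta>y z0 \<longlonglongrightarrow> (0, 0))"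
proof (rule gda_not_tendsto_origin_of_linear_gradient
    [where \<alpha> = "- L" and \<beta> = b and \<gamma> = b and \<epsilon> = "- \<mu>"])
  have "\<eta>x * \<eta>y * (\<mu> * L) \<le> \<eta>x * \<eta>y * (b * b)"
    using assms by (intro mult_left_mono) auto
  then show "(1 - \<eta>x * (- L)) * (1 + \<eta>y * (- \<mu>)) + \<eta>x * \<eta>y * b * b \<ge> 1"
    using assms(3) by (simp add: algebra_simps)
qed (use assms px_saddle_quadratic py_saddle_quadratic in simp_all)

lemma sqrt_coupling_le:
  fixes L \<mu> \<mu>x :: real
  assumes "0 < \<mu>" "\<mu>x \<le> L" "2 * \<mu> \<le> L"
  shows "sqrt (\<mu> * (\<mu>x + L)) \<le> L"
proof -
  have "\<mu> * (\<mu>x + L) \<le> \<mu> * (2 * L)" using assms by simp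
  also have "\<dots> = (2 * \<mu>) * L" by simp
  also have "\<dots> \<le> L ^ 2" using assms by (simp add: power2_eq_square mult_right_mono)
  finally have "sqrt (\<mu> * (\<mu>x + L)) \<le> sqrt (L ^ 2)"
    by (rule real_sqrt_le_mono)
  then show ?thesis
    using assms by simp
qed

theorem theorem1:
  fixes L \<mu> \<mu>x :: real
  assumes "L > 0" and "\<mu> > 0" and "0 < \<mu>x" and "\<mu>x \<le> L" and "L / \<mu> \<ge> 2"
  shows "\<exists>(f :: real \<times> real \<Rightarrow> real) zs. is_quadratic f \<and> C2 f \<and> dse_params f zs L \<mu> \<mu>x
     \<and> (\<forall>\<eta>x \<eta>y. \<eta>x > 0 \<longrightarrow> \<eta>y > 0 \<longrightarrow> \<eta>y / \<eta>x \<le> L / \<mu> \<longrightarrow>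
          (\<forall>\<delta>>0. \<exists>z0. norm (z0 - zs) \<le> \<delta> \<and> \<not> (gda f \<eta>x \<eta>y z0 \<longlonglongrightarrow> zs)))"
proof -
  define b where "b = sqrt (\<mu> * (\<mu>x + L))"
  have "2 * \<mu> \<le> L" using assms by (simp add: field_simps)
  then have "\<mu> \<le> L" "b \<le> L" "0 \<le> b"
    using assms sqrt_coupling_le by (simp_all add: b_def)
  moreover have b_sq: "b * b = \<mu> * (\<mu>x + L)"
    unfolding b_def using assms by simp
  ultimately have "dse_params (quadratic_fun (- L / 2) b (- \<mu> / 2) 0 0 0) (0, 0) L \<mu> \<mu>x"
    using assms by (intro dse_params_saddle_quadratic) auto
  moreover have "\<mu> * L \<le> b * b"
    unfolding b_sq using assms by (simp add: algebra_simps)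
  then have "\<exists>z0. norm (z0 - (0, 0)) \<le> \<delta>
      \<and> \<not> (gda (quadratic_fun (- L / 2) b (- \<mu> / 2) 0 0 0) \<eta>x \<eta>y z0 \<longlonglongrightarrow> (0, 0))"
    if "0 < \<eta>x" "0 < \<eta>y" "\<eta>y / \<eta>x \<le> L / \<mu>" "0 < \<delta>" for \<eta>x \<eta>y \<delta>
    using that assms by (intro gda_saddle_quadratic_not_tendsto_origin) (simp_all add: field_simps)
  ultimately show ?thesis
    using is_quadratic_quadratic_fun C2_quadratic_fun by blast
qed

end
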